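(* For any permutation $\sigma\in\mathrm{Sym}(n)$, the cyclic group $G=\langle\sigma\rangle\leq\mathrm{Sym}(n)$, with its natural action on $\{1,\dots,n\}$, has the strict EKR property.
   Context: Two permutations $\pi,\tau\in G$ intersect if $\pi\tau^{-1}$ has a fixed point in $\{1,\dots,n\}$. A subset of $G$ is intersecting if every pair of its elements intersect. $G$ has the EKR property if every intersecting subset of $G$ has size at most the size of the largest point-stabilizer in $G$. $G$ has the strict EKR property if it has the EKR property and the only intersecting subsets of maximum size in $G$ are the cosets of the (largest) point-stabilizers. *)

theory Defs
  imports "HOL-Combinatorics.Permutations"
begin

text \<open>Permutation groups are sets of permutations of {1..n}, i.e. functions
  nat \<Rightarrow> nat that permute {1..n} (and fix everything outside).\<close>

definition perm_intersect :: "nat \<Rightarrow> (nat \<Rightarrow> nat) \<Rightarrow> (nat \<Rightarrow> nat) \<Rightarrow> bool" where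
  "perm_intersect n \<pi> \<tau> \<longleftrightarrow> (\<exists>i\<in>{1..n}. (\<pi> \<circ> inv \<tau>) i = i)"

definition intersecting :: "nat \<Rightarrow> (nat \<Rightarrow> nat) set \<Rightarrow> bool" where
  "intersecting n S \<longleftrightarrow> (\<forall>\<pi>\<in>S. \<forall>\<tau>\<in>S. perm_intersect n \<pi> \<tau>)"

definition stab :: "(nat \<Rightarrow> nat) set \<Rightarrow> nat \<Rightarrow> (nat \<Rightarrow> nat) set" where
  "stab G i = {g \<in> G. g i = i}"

definition max_stab_size :: "nat \<Rightarrow> (nat \<Rightarrow> nat) set \<Rightarrow> nat" where
  "max_stab_size n G = Max ((\<lambda>i. card (stab G i)) ` {1..n})"

definition EKR :: "nat \<Rightarrow> (nat \<Rightarrow> nat) set \<Rightarrow> bool" where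
  "EKR n G \<longleftrightarrow> (\<forall>S. S \<subseteq> G \<and> intersecting n S \<longrightarrow> card S \<le> max_stab_size n G)"

text \<open>Cosets of point-stabilizers: g G_i (left cosets); note G_i g = g G_(inv g i),
  so right cosets are covered as well.\<close>
definition strict_EKR :: "nat \<Rightarrow> (nat \<Rightarrow> nat) set \<Rightarrow> bool" where
  "strict_EKR n G \<longleftrightarrow> EKR n G \<and>
     (\<forall>S. S \<subseteq> G \<and> intersecting n S \<and> card S = max_stab_size n G \<longrightarrow>
        (\<exists>g\<in>G. \<exists>i\<in>{1..n}. card (stab G i) = max_stab_size n G \<and>
            S = (\<lambda>h. g \<circ> h) ` stab G i))"

definition cyclic_perm_group :: "(nat \<Rightarrow> nat) \<Rightarrow> (nat \<Rightarrow> nat) set" where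
  "cyclic_perm_group \<sigma> = {\<sigma> ^^ k | k. True}"

end

theory Submission
  imports Defs "HOL-Combinatorics.Cycles"
begin

text \<open>Let \<open>l\<close> be the length of a shortest cycle of \<open>\<sigma>\<close> and \<open>i\<close> a point on such a cycle.
  Then the stabilizer of \<open>i\<close> in \<open>G = \<langle>\<sigma>\<rangle>\<close> is \<open>\<langle>\<sigma>\<^sup>l\<rangle>\<close>, so \<open>G = G\<^sub>i T\<close> with
  \<open>T = {\<sigma>\<^sup>0, \<dots>, \<sigma>\<^sup>l\<^sup>-\<^sup>1}\<close>, and \<open>|G| \<le> |G\<^sub>i| l\<close>. As \<open>\<sigma>\<^sup>d\<close> is fixed-point-free for
  \<open>0 < d < l\<close>, an intersecting set \<open>S\<close> never contains both \<open>s\<close> and \<open>s\<sigma>\<^sup>d\<close>, so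
  \<open>(s, t) \<mapsto> st\<close> is injective on \<open>S \<times> T\<close>, whence \<open>|S| \<le> |G\<^sub>i|\<close>.
  If equality holds then \<open>ST = G\<close>, which forces \<open>S\<sigma>\<^sup>l \<subseteq> S\<close>, so \<open>S\<close> is a coset of \<open>G\<^sub>i\<close>.\<close>

lemma comp_surj_cancel: "surj g \<Longrightarrow> f \<circ> g = h \<circ> g \<Longrightarrow> f = h"
  by (metis comp_assoc comp_id surj_iff)

lemma perm_intersect_iff:
  assumes "\<tau> permutes {1..n}"
  shows "perm_intersect n \<pi> \<tau> \<longleftrightarrow> (\<exists>j\<in>{1..n}. \<pi> j = \<tau> j)"
proof -
  have "(\<exists>i\<in>{1..n}. \<pi> (inv \<tau> i) = i) \<longleftrightarrow> (\<exists>i\<in>\<tau> ` {1..n}. \<pi> (inv \<tau> i) = i)"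
    using assms by (simp add: permutes_image)
  then show ?thesis
    unfolding perm_intersect_def using permutes_inverses(2)[OF assms] by simp
qed

lemma intersecting_stab:
  assumes "\<And>g. g \<in> G \<Longrightarrow> g permutes {1..n}" and "i \<in> {1..n}"
  shows "intersecting n (stab G i)"
  using assms unfolding intersecting_def stab_def by (auto simp: perm_intersect_iff intro!: bexI[of _ i])

lemma cyclic_perm_group_eq_range: "cyclic_perm_group \<sigma> = range (\<lambda>k. \<sigma> ^^ k)"
  unfolding cyclic_perm_group_def by auto

lemma comp_mem_cyclic_perm_group:
  "g \<in> cyclic_perm_group \<sigma> \<Longrightarrow> h \<in> cyclic_perm_group \<sigma> \<Longrightarrow> g \<circ> h \<in> cyclic_perm_group \<sigma>"
  unfolding cyclic_perm_group_eq_range by (auto simp flip: funpow_add)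

lemma permutes_of_mem_cyclic_perm_group:
  "\<sigma> permutes A \<Longrightarrow> g \<in> cyclic_perm_group \<sigma> \<Longrightarrow> g permutes A"
  unfolding cyclic_perm_group_eq_range by (auto intro: permutes_funpow)

lemma finite_cyclic_perm_group:
  assumes "\<sigma> permutes A" and "finite A"
  shows "finite (cyclic_perm_group \<sigma>)"
  using assms permutes_of_mem_cyclic_perm_group
  by (blast intro: finite_subset[OF _ finite_permutations])

locale cyclic_perm =
  fixes n :: nat and \<sigma> :: "nat \<Rightarrow> nat"
  assumes n_pos: "1 \<le> n" and permutes: "\<sigma> permutes {1..n}"
begin

abbreviation G where "G \<equiv> cyclic_perm_group \<sigma>"

definition min_cycle_length :: nat where
  "min_cycle_length = (LEAST k. 0 < k \<and> (\<exists>i\<in>{1..n}. (\<sigma> ^^ k) i = i))"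

abbreviation H where "H \<equiv> cyclic_perm_group (\<sigma> ^^ min_cycle_length)"

definition short_powers :: "(nat \<Rightarrow> nat) set" where
  "short_powers = (\<lambda>k. \<sigma> ^^ k) ` {..<min_cycle_length}"

lemma permutes_of_mem: "g \<in> G \<Longrightarrow> g permutes {1..n}"
  using permutes by (rule permutes_of_mem_cyclic_perm_group)

lemma finite_G: "finite G"
  using permutes by (simp add: finite_cyclic_perm_group)

lemma finite_H: "finite H"
  using permutes_funpow[OF permutes] by (rule finite_cyclic_perm_group) simp

lemma card_H_pos: "0 < card H"
proof -
  have "id \<in> H"
    unfolding cyclic_perm_group_eq_range by (auto intro: range_eqI[of _ _ 0])
  then show ?thesis
    using finite_H card_gt_0_iff by blast
qed

lemma surj_funpow: "surj (\<sigma> ^^ k)"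
  using permutes_funpow[OF permutes] by (rule permutes_surj)

lemma inj_funpow: "inj (\<sigma> ^^ k)"
  using permutes_funpow[OF permutes] by (rule permutes_inj)

lemma ex_fixpoint_power:
  "\<exists>k. 0 < k \<and> (\<exists>i\<in>{1..n}. (\<sigma> ^^ k) i = i)"
proof -
  have "permutation \<sigma>"
    using permutes by (auto simp: permutation_permutes)
  then obtain k where "0 < k" "(\<sigma> ^^ k) 1 = 1"
    by (rule permutation_self)
  then show ?thesis
    using n_pos by (intro exI[of _ k] conjI bexI[of _ 1]) auto
qed

lemma min_cycle_length_pos: "0 < min_cycle_length"
  using LeastI_ex[OF ex_fixpoint_power] unfolding min_cycle_length_def by blast

lemma ex_fixpoint_min_cycle_length: "\<exists>i\<in>{1..n}. (\<sigma> ^^ min_cycle_length) i = i"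
  using LeastI_ex[OF ex_fixpoint_power] unfolding min_cycle_length_def by blast

lemma funpow_no_fixpoint_below_min_cycle_length:
  "0 < k \<Longrightarrow> k < min_cycle_length \<Longrightarrow> i \<in> {1..n} \<Longrightarrow> (\<sigma> ^^ k) i \<noteq> i"
  using not_less_Least[of k "\<lambda>k. 0 < k \<and> (\<exists>i\<in>{1..n}. (\<sigma> ^^ k) i = i)"]
  unfolding min_cycle_length_def by auto

lemma funpow_decomp_min_cycle_length:
  "\<sigma> ^^ k = \<sigma> ^^ (min_cycle_length * (k div min_cycle_length)) \<circ> \<sigma> ^^ (k mod min_cycle_length)"
  by (simp flip: funpow_add)

lemma stab_min_cycle:
  assumes "i \<in> {1..n}" and fix_i: "(\<sigma> ^^ min_cycle_length) i = i"
  shows "stab G i = H"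
proof -
  let ?l = min_cycle_length
  have fix_mult: "(\<sigma> ^^ (?l * q)) i = i" for q
    using fix_i by (induction q) (simp_all add: funpow_add)
  have "\<exists>q. \<sigma> ^^ k = \<sigma> ^^ (?l * q)" if "(\<sigma> ^^ k) i = i" for k
  proof -
    have "(\<sigma> ^^ (?l * (k div ?l))) ((\<sigma> ^^ (k mod ?l)) i) = (\<sigma> ^^ (?l * (k div ?l))) i"
      using that fix_mult funpow_decomp_min_cycle_length[of k] by (simp add: fun_eq_iff)
    then have "(\<sigma> ^^ (k mod ?l)) i = i"
      using inj_funpow by (simp add: inj_eq)
    then have "k mod ?l = 0"
      using funpow_no_fixpoint_below_min_cycle_length[of "k mod ?l" i] assms(1) min_cycle_length_pos
      by (cases "k mod ?l = 0") simp_all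
    then show ?thesis
      using funpow_decomp_min_cycle_length[of k] by auto
  qed
  then show ?thesis
    unfolding stab_def cyclic_perm_group_eq_range funpow_mult using fix_mult by (auto simp: image_iff)
qed

lemma comp_surj_cancel_funpow_diff:
  assumes "a \<le> b" and "f \<circ> \<sigma> ^^ a = g \<circ> \<sigma> ^^ b"
  shows "f = g \<circ> \<sigma> ^^ (b - a)"
proof (rule comp_surj_cancel[OF surj_funpow])
  show "f \<circ> \<sigma> ^^ a = (g \<circ> \<sigma> ^^ (b - a)) \<circ> \<sigma> ^^ a"
    using assms by (simp add: comp_assoc flip: funpow_add)
qed

lemma card_short_powers: "card short_powers = min_cycle_length"
proof -
  have "\<sigma> ^^ a \<noteq> \<sigma> ^^ b" if "a < b" "b < min_cycle_length" for a b
  proof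
    assume "\<sigma> ^^ a = \<sigma> ^^ b"
    then have "\<sigma> ^^ (b - a) = id"
      using comp_surj_cancel_funpow_diff[of a b id id] that by simp
    with funpow_no_fixpoint_below_min_cycle_length[of "b - a" 1] n_pos that
    show False by (simp add: less_imp_diff_less)
  qed
  then have "inj_on (\<lambda>k. \<sigma> ^^ k) {..<min_cycle_length}"
    by (intro inj_onI) (metis lessThan_iff linorder_neqE_nat)
  then show ?thesis
    unfolding short_powers_def by (simp add: card_image)
qed

lemma short_powers_subset: "short_powers \<subseteq> G"
  unfolding short_powers_def cyclic_perm_group_eq_range by (rule image_mono) simp

lemma G_subset_H_comp_short_powers:
  "G \<subseteq> (\<lambda>(s, t). s \<circ> t) ` (H \<times> short_powers)"
proof
  fix g assume "g \<in> G"
  then obtain k where k: "g = \<sigma> ^^ k"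
    unfolding cyclic_perm_group_eq_range by auto
  let ?s = "\<sigma> ^^ (min_cycle_length * (k div min_cycle_length))"
  let ?t = "\<sigma> ^^ (k mod min_cycle_length)"
  have "?s \<in> H"
    unfolding cyclic_perm_group_eq_range funpow_mult by simp
  moreover have "?t \<in> short_powers"
    unfolding short_powers_def using min_cycle_length_pos by simp
  moreover have "g = ?s \<circ> ?t"
    unfolding k by (rule funpow_decomp_min_cycle_length)
  ultimately show "g \<in> (\<lambda>(s, t). s \<circ> t) ` (H \<times> short_powers)"
    by (intro image_eqI[where x = "(?s, ?t)"]) simp_all
qed

lemma card_G_le_card_H_mult:
  "card G \<le> card H * min_cycle_length"
proof -
  have fin: "finite (H \<times> short_powers)"
    using finite_H by (simp add: short_powers_def)
  have "card G \<le> card ((\<lambda>(s, t). s \<circ> t) ` (H \<times> short_powers))"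
    using fin G_subset_H_comp_short_powers by (intro card_mono) auto
  also have "\<dots> \<le> card (H \<times> short_powers)"
    using fin by (rule card_image_le)
  finally show ?thesis
    by (simp add: card_cartesian_product card_short_powers)
qed

lemma intersecting_comp_short_power_notin:
  assumes "S \<subseteq> G" "intersecting n S" "s \<in> S" "0 < d" "d < min_cycle_length"
  shows "s \<circ> \<sigma> ^^ d \<notin> S"
proof
  assume "s \<circ> \<sigma> ^^ d \<in> S"
  with assms(2,3) have "perm_intersect n (s \<circ> \<sigma> ^^ d) s"
    unfolding intersecting_def by blast
  moreover have s_perm: "s permutes {1..n}"
    using assms(1,3) permutes_of_mem by blast
  ultimately obtain j where j: "j \<in> {1..n}" "s ((\<sigma> ^^ d) j) = s j"
    by (auto simp: perm_intersect_iff)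
  then have "(\<sigma> ^^ d) j = j"
    using permutes_inj[OF s_perm] by (simp add: inj_eq)
  with j(1) assms(4,5) show False
    using funpow_no_fixpoint_below_min_cycle_length by blast
qed

lemma inj_on_comp_short_powers:
  assumes "S \<subseteq> G" "intersecting n S"
  shows "inj_on (\<lambda>(s, t). s \<circ> t) (S \<times> short_powers)"
proof -
  have ordered: "s = s'"
    if "s \<in> S" "s' \<in> S" "s \<circ> \<sigma> ^^ a = s' \<circ> \<sigma> ^^ b" "a \<le> b" "b < min_cycle_length"
    for s s' a b
  proof (rule ccontr)
    assume "s \<noteq> s'"
    have s_eq: "s = s' \<circ> \<sigma> ^^ (b - a)"
      using comp_surj_cancel_funpow_diff that(4,3) .
    with \<open>s \<noteq> s'\<close> have "0 < b - a"
      by (cases "b - a") auto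
    moreover have "b - a < min_cycle_length"
      using that(5) by (rule less_imp_diff_less)
    ultimately have "s' \<circ> \<sigma> ^^ (b - a) \<notin> S"
      using intersecting_comp_short_power_notin[OF assms that(2)] by blast
    with s_eq that(1) show False
      by simp
  qed
  have same_factor: "s = s'"
    if "s \<in> S" "s' \<in> S" "s \<circ> \<sigma> ^^ a = s' \<circ> \<sigma> ^^ b" "a < min_cycle_length" "b < min_cycle_length"
    for s s' a b
  proof (cases "a \<le> b")
    case True
    from ordered[OF that(1-3) True that(5)] show ?thesis .
  next
    case False
    then have "b \<le> a" by simp
    from ordered[OF that(2,1) that(3)[symmetric] this that(4)] show ?thesis by (rule sym)
  qed
  show ?thesis
    unfolding short_powers_def
  proof (rule inj_onI, clarify)
    fix s s' a b
    assume "s \<in> S" "s' \<in> S" "a < min_cycle_length" "b < min_cycle_length"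
      and eq: "s \<circ> \<sigma> ^^ a = s' \<circ> \<sigma> ^^ b"
    then have "s = s'"
      using same_factor by blast
    moreover have "inj ((\<circ>) s)"
      using \<open>s \<in> S\<close> assms(1) permutes_of_mem permutes_inj fun.inj_map by blast
    ultimately show "s = s' \<and> \<sigma> ^^ a = \<sigma> ^^ b"
      using eq by (auto dest: injD)
  qed
qed

lemma comp_short_powers_subset_G:
  assumes "S \<subseteq> G"
  shows "(\<lambda>(s, t). s \<circ> t) ` (S \<times> short_powers) \<subseteq> G"
proof clarify
  fix s t assume "s \<in> S" "t \<in> short_powers"
  with assms short_powers_subset show "s \<circ> t \<in> G"
    by (intro comp_mem_cyclic_perm_group) auto
qed

lemma card_comp_short_powers_intersecting:
  assumes "S \<subseteq> G" "intersecting n S"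
  shows "card ((\<lambda>(s, t). s \<circ> t) ` (S \<times> short_powers)) = card S * min_cycle_length"
  using card_image[OF inj_on_comp_short_powers[OF assms]]
  by (simp add: card_cartesian_product card_short_powers)

lemma card_intersecting_le:
  assumes "S \<subseteq> G" "intersecting n S"
  shows "card S \<le> card H"
proof -
  have "card S * min_cycle_length = card ((\<lambda>(s, t). s \<circ> t) ` (S \<times> short_powers))"
    using card_comp_short_powers_intersecting[OF assms] by simp
  also have "\<dots> \<le> card G"
    using finite_G comp_short_powers_subset_G[OF assms(1)] by (rule card_mono)
  also have "\<dots> \<le> card H * min_cycle_length"
    by (rule card_G_le_card_H_mult)
  finally show ?thesis
    using min_cycle_length_pos mult_le_cancel2 by blast
qed

lemma max_stab_size_eq_card_H: "max_stab_size n G = card H"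
  unfolding max_stab_size_def
proof (rule Max_eqI)
  obtain i where "i \<in> {1..n}" "(\<sigma> ^^ min_cycle_length) i = i"
    using ex_fixpoint_min_cycle_length by blast
  then show "card H \<in> (\<lambda>i. card (stab G i)) ` {1..n}"
    using stab_min_cycle by (metis image_eqI)
next
  fix m assume "m \<in> (\<lambda>i. card (stab G i)) ` {1..n}"
  then obtain i where "i \<in> {1..n}" "m = card (stab G i)"
    by blast
  then show "m \<le> card H"
    using card_intersecting_le[of "stab G i"] intersecting_stab[OF permutes_of_mem]
    by (auto simp: stab_def)
qed simp

lemma intersecting_max_comp_min_cycle_power:
  assumes "S \<subseteq> G" "intersecting n S" "card S = card H" "s \<in> S"
  shows "s \<circ> \<sigma> ^^ min_cycle_length \<in> S"
proof -
  let ?l = min_cycle_length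
  have "card G \<le> card ((\<lambda>(s, t). s \<circ> t) ` (S \<times> short_powers))"
    using card_G_le_card_H_mult card_comp_short_powers_intersecting[OF assms(1,2)] assms(3) by simp
  then have "(\<lambda>(s, t). s \<circ> t) ` (S \<times> short_powers) = G"
    using card_seteq[OF finite_G comp_short_powers_subset_G[OF assms(1)]] by blast
  moreover have "s \<circ> \<sigma> ^^ ?l \<in> G"
    using assms(1,4) comp_mem_cyclic_perm_group[of s \<sigma> "\<sigma> ^^ ?l"]
    by (auto simp: cyclic_perm_group_eq_range)
  ultimately have "s \<circ> \<sigma> ^^ ?l \<in> (\<lambda>(s, t). s \<circ> t) ` (S \<times> short_powers)"
    by simp
  then obtain s' c where s': "s' \<in> S" "c < ?l" "s \<circ> \<sigma> ^^ ?l = s' \<circ> \<sigma> ^^ c"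
    unfolding short_powers_def by auto
  show ?thesis
  proof (cases "c = 0")
    case True
    with s' show ?thesis by simp
  next
    case False
    have "s' = s \<circ> \<sigma> ^^ (?l - c)"
      using comp_surj_cancel_funpow_diff[of c ?l s' s] s'(2,3) by simp
    moreover have "s \<circ> \<sigma> ^^ (?l - c) \<notin> S"
      using intersecting_comp_short_power_notin[OF assms(1,2,4)] False s'(2) by simp
    ultimately show ?thesis
      using s'(1) by simp
  qed
qed

lemma intersecting_max_eq_coset:
  assumes "S \<subseteq> G" "intersecting n S" "card S = card H" "s \<in> S"
  shows "S = (\<lambda>h. s \<circ> h) ` H"
proof -
  have "s \<circ> (\<sigma> ^^ min_cycle_length) ^^ q \<in> S" for q
  proof (induction q)
    case (Suc q)
    have "s \<circ> (\<sigma> ^^ min_cycle_length) ^^ Suc q = (s \<circ> (\<sigma> ^^ min_cycle_length) ^^ q) \<circ> \<sigma> ^^ min_cycle_length"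
      by (simp only: funpow_Suc_right comp_assoc)
    then show ?case
      using intersecting_max_comp_min_cycle_power[OF assms(1-3) Suc] by (simp only:)
  qed (use assms(4) in simp)
  then have sub: "(\<lambda>h. s \<circ> h) ` H \<subseteq> S"
    unfolding cyclic_perm_group_eq_range by auto
  have "inj ((\<circ>) s)"
    using assms(1,4) permutes_of_mem permutes_inj fun.inj_map by blast
  then have "card ((\<lambda>h. s \<circ> h) ` H) = card S"
    using assms(3) card_image[OF inj_on_subset[OF _ subset_UNIV]] by metis
  then show ?thesis
    using card_seteq[OF finite_subset[OF assms(1) finite_G] sub] by simp
qed

end

theorem theorem5:
  fixes n :: nat and \<sigma> :: "nat \<Rightarrow> nat"
  assumes "n \<ge> 1" and "\<sigma> permutes {1..n}"
  shows "strict_EKR n (cyclic_perm_group \<sigma>)"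
proof -
  interpret cyclic_perm n \<sigma>
    using assms by unfold_locales
  have bound: "card S \<le> max_stab_size n G" if "S \<subseteq> G" "intersecting n S" for S
    unfolding max_stab_size_eq_card_H using that by (rule card_intersecting_le)
  have coset: "\<exists>g\<in>G. \<exists>i\<in>{1..n}. card (stab G i) = max_stab_size n G \<and> S = (\<lambda>h. g \<circ> h) ` stab G i"
    if S: "S \<subseteq> G" "intersecting n S" "card S = max_stab_size n G" for S
  proof -
    obtain i where i: "i \<in> {1..n}" "(\<sigma> ^^ min_cycle_length) i = i"
      using ex_fixpoint_min_cycle_length by blast
    have card_S: "card S = card H"
      using S(3) max_stab_size_eq_card_H by simp
    with card_H_pos have "S \<noteq> {}"
      by auto
    then obtain s where s: "s \<in> S"
      by blast
    have "S = (\<lambda>h. s \<circ> h) ` stab G i"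
      unfolding stab_min_cycle[OF i] using S(1,2) card_S s by (rule intersecting_max_eq_coset)
    moreover have "card (stab G i) = max_stab_size n G"
      unfolding stab_min_cycle[OF i] max_stab_size_eq_card_H ..
    ultimately show ?thesis
      using s S(1) i(1) by blast
  qed
  show ?thesis
    unfolding strict_EKR_def EKR_def using bound coset by blast
qed

end
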